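(* Let $F$ be any VSCC (over linear profiles) satisfying Coherent Defeat and Tolerant Positive Involvement. Then $F(\mathbf P)\subseteq SC(\mathbf P)$ for every profile $\mathbf P$, where $SC$ is the Split Cycle VSCC.
   Context: Profiles: $\mathbf P:V\to\mathcal L(X)$ with $V$ a nonempty finite set of voters, $X=X(\mathbf P)$ a nonempty finite set of candidates (from fixed infinite sets), $\mathcal L(X)$ the strict linear orders on $X$. $\mathrm{Margin}_{\mathbf P}(x,y)$ = #voters ranking $x$ above $y$ minus #ranking $y$ above $x$; $x$ is majority preferred to $y$ if it is $>0$. Majority path from $x_1$ to $x_n$: $(x_1,\dots,x_n)$ with all $\mathrm{Margin}_{\mathbf P}(x_i,x_{i+1})>0$; strength = minimum of these margins. $(x,y)\in sc(\mathbf P)$ iff $\mathrm{Margin}_{\mathbf P}(x,y)>0$ and it exceeds the strength of every majority path from $y$ to $x$; $SC(\mathbf P)=\{y: \text{no } x \text{ with } (x,y)\in sc(\mathbf P)\}$. A VSCC is $F$ with $\varnothing\ne F(\mathbf P)\subseteq X(\mathbf P)$ for all profiles. Coherent Defeat: if $\mathrm{Margin}_{\mathbf P}(x,y)>0$ and there is no majority path from $y$ to $x$, then $y\notin F(\mathbf P)$. Tolerant Positive Involvement: if $x\in F(\mathbf P)$ and $\mathbf P'$ is obtained from $\mathbf P$ by adding one new voter who ranks $x$ above every other candidate $y$ such that $x$ is not majority preferred to $y$ in $\mathbf P$, then $x\in F(\mathbf P')$. *)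

theory Defs
  imports Main
begin

text \<open>A profile is a triple (V, X, P): a set of voters V, a set of candidates X,
 and for each voter i a binary relation P i on candidates, where P i x y means
 that voter i ranks x above y.\<close>

type_synonym ('v, 'c) profile = "'v set \<times> 'c set \<times> ('v \<Rightarrow> 'c \<Rightarrow> 'c \<Rightarrow> bool)"

definition voters :: "('v, 'c) profile \<Rightarrow> 'v set" where
  "voters Pr = fst Pr"

definition cands :: "('v, 'c) profile \<Rightarrow> 'c set" where
  "cands Pr = fst (snd Pr)"

definition ballot :: "('v, 'c) profile \<Rightarrow> 'v \<Rightarrow> 'c \<Rightarrow> 'c \<Rightarrow> bool" where
  "ballot Pr = snd (snd Pr)"

definition strict_linear_order_on :: "'c set \<Rightarrow> ('c \<Rightarrow> 'c \<Rightarrow> bool) \<Rightarrow> bool" where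
  "strict_linear_order_on X R \<longleftrightarrow>
     (\<forall>x y. R x y \<longrightarrow> x \<in> X \<and> y \<in> X) \<and>
     (\<forall>x. \<not> R x x) \<and>
     (\<forall>x y z. R x y \<longrightarrow> R y z \<longrightarrow> R x z) \<and>
     (\<forall>x\<in>X. \<forall>y\<in>X. x \<noteq> y \<longrightarrow> R x y \<or> R y x)"

definition is_profile :: "('v, 'c) profile \<Rightarrow> bool" where
  "is_profile Pr \<longleftrightarrow>
     finite (voters Pr) \<and> voters Pr \<noteq> {} \<and>
     finite (cands Pr) \<and> cands Pr \<noteq> {} \<and>
     (\<forall>i\<in>voters Pr. strict_linear_order_on (cands Pr) (ballot Pr i)) \<and>
     (\<forall>i. i \<notin> voters Pr \<longrightarrow> (\<forall>x y. \<not> ballot Pr i x y))"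

definition margin :: "('v, 'c) profile \<Rightarrow> 'c \<Rightarrow> 'c \<Rightarrow> int" where
  "margin Pr x y =
     int (card {i \<in> voters Pr. ballot Pr i x y}) - int (card {i \<in> voters Pr. ballot Pr i y x})"

definition majority_path :: "('v, 'c) profile \<Rightarrow> 'c list \<Rightarrow> bool" where
  "majority_path Pr xs \<longleftrightarrow>
     length xs \<ge> 2 \<and> distinct xs \<and>
     (\<forall>k. Suc k < length xs \<longrightarrow> margin Pr (xs ! k) (xs ! Suc k) > 0)"

definition path_strength :: "('v, 'c) profile \<Rightarrow> 'c list \<Rightarrow> int" where
  "path_strength Pr xs = Min {margin Pr (xs ! k) (xs ! Suc k) | k. Suc k < length xs}"

definition sc_defeats :: "('v, 'c) profile \<Rightarrow> 'c \<Rightarrow> 'c \<Rightarrow> bool" where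
  "sc_defeats Pr x y \<longleftrightarrow>
     margin Pr x y > 0 \<and>
     (\<forall>xs. majority_path Pr xs \<and> hd xs = y \<and> last xs = x \<longrightarrow>
           margin Pr x y > path_strength Pr xs)"

definition split_cycle :: "('v, 'c) profile \<Rightarrow> 'c set" where
  "split_cycle Pr = {y \<in> cands Pr. \<not> (\<exists>x. sc_defeats Pr x y)}"

definition vscc :: "(('v, 'c) profile \<Rightarrow> 'c set) \<Rightarrow> bool" where
  "vscc F \<longleftrightarrow> (\<forall>Pr. is_profile Pr \<longrightarrow> F Pr \<noteq> {} \<and> F Pr \<subseteq> cands Pr)"

definition coherent_defeat :: "(('v, 'c) profile \<Rightarrow> 'c set) \<Rightarrow> bool" where
  "coherent_defeat F \<longleftrightarrow>
     (\<forall>Pr x y. is_profile Pr \<longrightarrow> margin Pr x y > 0 \<longrightarrow>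
        \<not> (\<exists>xs. majority_path Pr xs \<and> hd xs = y \<and> last xs = x) \<longrightarrow>
        y \<notin> F Pr)"

definition add_voter :: "('v, 'c) profile \<Rightarrow> 'v \<Rightarrow> ('c \<Rightarrow> 'c \<Rightarrow> bool) \<Rightarrow> ('v, 'c) profile" where
  "add_voter Pr i R = (insert i (voters Pr), cands Pr, (ballot Pr)(i := R))"

definition tolerant_positive_involvement :: "(('v, 'c) profile \<Rightarrow> 'c set) \<Rightarrow> bool" where
  "tolerant_positive_involvement F \<longleftrightarrow>
     (\<forall>Pr x i R. is_profile Pr \<longrightarrow> x \<in> F Pr \<longrightarrow> i \<notin> voters Pr \<longrightarrow>
        strict_linear_order_on (cands Pr) R \<longrightarrow>
        (\<forall>y\<in>cands Pr. y \<noteq> x \<longrightarrow> \<not> margin Pr x y > 0 \<longrightarrow> R x y) \<longrightarrow>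
        x \<in> F (add_voter Pr i R))"

end

theory Submission
  imports Defs "HOL-Library.Transitive_Closure_Table"
begin

(* Suppose a winner y is defeated in Split Cycle by x with margin M. Coherent Defeat yields a
   majority path from y back to x; its strength is positive, below M, and of the same parity
   as M (all margins have the parity of the number of voters), so M >= 3. Let H be the set of
   candidates reachable from y along edges of margin at least M; then x is not in H. Add a voter
   ranking first the candidates that y beats, then y, then the other candidates outside H, then
   those of H. Tolerant Positive Involvement keeps y a winner, margin(x, y) drops to M - 1, and no
   edge of margin at least M - 1 leaves H, so x still defeats y. Descent on M is impossible. *)

lemma margin_antisym: "margin Pr a b = - margin Pr b a"
  unfolding margin_def by simp

lemma margin_pos_imp_cands:
  assumes "is_profile Pr" and "margin Pr a b > 0"
  shows "a \<in> cands Pr" and "b \<in> cands Pr" and "a \<noteq> b"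
proof -
  have "{i \<in> voters Pr. ballot Pr i a b} \<noteq> {}"
    using assms(2) unfolding margin_def by fastforce
  then obtain i where "i \<in> voters Pr" "ballot Pr i a b" by blast
  with assms(1) show "a \<in> cands Pr" "b \<in> cands Pr" "a \<noteq> b"
    unfolding is_profile_def strict_linear_order_on_def by metis+
qed

lemma margin_eq_card:
  assumes P: "is_profile Pr" and "a \<in> cands Pr" "b \<in> cands Pr" "a \<noteq> b"
  shows "margin Pr a b = 2 * int (card {i \<in> voters Pr. ballot Pr i a b}) - int (card (voters Pr))"
proof -
  let ?A = "{i \<in> voters Pr. ballot Pr i a b}" and ?B = "{i \<in> voters Pr. ballot Pr i b a}"
  have "voters Pr = ?A \<union> ?B" and "?A \<inter> ?B = {}"
    using assms unfolding is_profile_def strict_linear_order_on_def by blast+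
  moreover have "finite (voters Pr)" using P by (simp add: is_profile_def)
  ultimately have "card (voters Pr) = card ?A + card ?B"
    by (metis card_Un_disjoint finite_Un)
  then show ?thesis unfolding margin_def by simp
qed

lemma even_margin_diff:
  assumes "is_profile Pr"
    and "a \<in> cands Pr" "b \<in> cands Pr" "a \<noteq> b"
    and "c \<in> cands Pr" "d \<in> cands Pr" "c \<noteq> d"
  shows "even (margin Pr a b - margin Pr c d)"
proof -
  have "margin Pr a b - margin Pr c d =
      2 * (int (card {i \<in> voters Pr. ballot Pr i a b}) - int (card {i \<in> voters Pr. ballot Pr i c d}))"
    using margin_eq_card[OF assms(1-4)] margin_eq_card[OF assms(1,5-7)] by simp
  then show ?thesis by simp
qed

lemma path_strength_eq_Min:
  "path_strength Pr xs = Min ((\<lambda>k. margin Pr (xs ! k) (xs ! Suc k)) ` {..<length xs - 1})"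
  unfolding path_strength_def by (rule arg_cong[where f = Min]) auto

lemma path_strength_ge_iff:
  assumes "majority_path Pr xs"
  shows "t \<le> path_strength Pr xs \<longleftrightarrow> (\<forall>k. Suc k < length xs \<longrightarrow> t \<le> margin Pr (xs ! k) (xs ! Suc k))"
proof -
  have "{..<length xs - 1} \<noteq> {}"
    using assms unfolding majority_path_def by (auto simp: lessThan_empty_iff)
  then show ?thesis unfolding path_strength_eq_Min by auto
qed

lemma path_strength_attained:
  assumes "majority_path Pr xs"
  obtains k where "Suc k < length xs" and "path_strength Pr xs = margin Pr (xs ! k) (xs ! Suc k)"
proof -
  have "{..<length xs - 1} \<noteq> {}"
    using assms unfolding majority_path_def by (auto simp: lessThan_empty_iff)
  then show ?thesis
    using that Min_in[of "(\<lambda>k. margin Pr (xs ! k) (xs ! Suc k)) ` {..<length xs - 1}"]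
    unfolding path_strength_eq_Min by fastforce
qed

lemma majority_path_of_rtranclp:
  assumes walk: "(\<lambda>a b. t \<le> margin Pr a b)\<^sup>*\<^sup>* y x" and "x \<noteq> y" and "0 < t"
  obtains xs where "majority_path Pr xs" and "hd xs = y" and "last xs = x"
    and "t \<le> path_strength Pr xs"
proof -
  obtain zs where zs: "rtrancl_path (\<lambda>a b. t \<le> margin Pr a b) y zs x" and "distinct (y # zs)"
    using walk by (metis rtranclp_eq_rtrancl_path rtrancl_path_distinct)
  have "zs \<noteq> []" using zs \<open>x \<noteq> y\<close> by (auto elim: rtrancl_path.cases)
  have steps: "\<forall>k. Suc k < length (y # zs) \<longrightarrow> t \<le> margin Pr ((y # zs) ! k) ((y # zs) ! Suc k)"
    using rtrancl_path_nth[OF zs] by simp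
  then have path: "majority_path Pr (y # zs)"
    using \<open>zs \<noteq> []\<close> \<open>distinct (y # zs)\<close> \<open>0 < t\<close> unfolding majority_path_def
    by (fastforce simp: Suc_le_eq)
  show ?thesis
  proof (rule that[OF path])
    show "last (y # zs) = x" using rtrancl_path_last[OF zs \<open>zs \<noteq> []\<close>] \<open>zs \<noteq> []\<close> by simp
    show "t \<le> path_strength Pr (y # zs)" using steps path_strength_ge_iff[OF path] by blast
  qed simp
qed

lemma list_leaves_set:
  assumes "xs \<noteq> []" and "hd xs \<in> H" and "last xs \<notin> H"
  obtains k where "Suc k < length xs" and "xs ! k \<in> H" and "xs ! Suc k \<notin> H"
  using assms
proof (induction xs arbitrary: thesis)
  case (Cons a ys)
  then have "ys \<noteq> []" by auto
  show ?case
  proof (cases "hd ys \<in> H")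
    case True
    have "last ys \<notin> H" using Cons.prems(4) \<open>ys \<noteq> []\<close> by simp
    then obtain k where "Suc k < length ys" "ys ! k \<in> H" "ys ! Suc k \<notin> H"
      using Cons.IH \<open>ys \<noteq> []\<close> True by blast
    then show ?thesis using Cons.prems(1)[of "Suc k"] by simp
  next
    case False
    with Cons.prems \<open>ys \<noteq> []\<close> show ?thesis by (force simp: hd_conv_nth)
  qed
qed simp

lemma add_voter_simps [simp]:
  "voters (add_voter Pr i R) = insert i (voters Pr)"
  "cands (add_voter Pr i R) = cands Pr"
  "ballot (add_voter Pr i R) = (ballot Pr)(i := R)"
  by (simp_all add: add_voter_def voters_def cands_def ballot_def)

lemma is_profile_add_voter:
  assumes "is_profile Pr" and "i \<notin> voters Pr" and "strict_linear_order_on (cands Pr) R"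
  shows "is_profile (add_voter Pr i R)"
  using assms unfolding is_profile_def by auto

lemma margin_add_voter:
  assumes P: "is_profile Pr" and i: "i \<notin> voters Pr" and R: "strict_linear_order_on (cands Pr) R"
    and "a \<in> cands Pr" "b \<in> cands Pr" "a \<noteq> b"
  shows "margin (add_voter Pr i R) a b = margin Pr a b + (if R a b then 1 else -1)"
proof -
  have fin: "finite (voters Pr)" using P by (simp add: is_profile_def)
  have count: "int (card {j \<in> voters (add_voter Pr i R). ballot (add_voter Pr i R) j u v}) =
      int (card {j \<in> voters Pr. ballot Pr j u v}) + (if R u v then 1 else 0)" for u v
  proof -
    have "{j \<in> voters (add_voter Pr i R). ballot (add_voter Pr i R) j u v} =
        (if R u v then insert i else id) {j \<in> voters Pr. ballot Pr j u v}"
      using i by auto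
    then show ?thesis using fin i by simp
  qed
  have "R a b \<longleftrightarrow> \<not> R b a" using R assms(4-6) unfolding strict_linear_order_on_def by blast
  then show ?thesis using count[of a b] count[of b a] unfolding margin_def by auto
qed

lemma strict_linear_order_on_lex:
  fixes lvl :: "'c \<Rightarrow> 'a::linorder"
  assumes "strict_linear_order_on X B"
  shows "strict_linear_order_on X (\<lambda>a b. a \<in> X \<and> b \<in> X \<and> (lvl a < lvl b \<or> lvl a = lvl b \<and> B a b))"
  using assms unfolding strict_linear_order_on_def
  by (smt (verit, best) order_less_trans linorder_neq_iff)

lemma sc_defeats_not_rtranclp:
  assumes "sc_defeats Pr x y"
  shows "\<not> (\<lambda>a b. margin Pr x y \<le> margin Pr a b)\<^sup>*\<^sup>* y x"
proof
  assume walk: "(\<lambda>a b. margin Pr x y \<le> margin Pr a b)\<^sup>*\<^sup>* y x"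
  have "0 < margin Pr x y" using assms unfolding sc_defeats_def by blast
  moreover from this have "x \<noteq> y" unfolding margin_def by auto
  ultimately obtain xs where "majority_path Pr xs" "hd xs = y" "last xs = x"
    "margin Pr x y \<le> path_strength Pr xs"
    using majority_path_of_rtranclp[OF walk] by blast
  with assms show False unfolding sc_defeats_def by fastforce
qed

lemma coherent_defeat_sc_defeats_margin_ge_3:
  assumes "coherent_defeat F" and P: "is_profile Pr" and "y \<in> F Pr" and d: "sc_defeats Pr x y"
  shows "3 \<le> margin Pr x y"
proof -
  have "0 < margin Pr x y" using d unfolding sc_defeats_def by blast
  then obtain xs where xs: "majority_path Pr xs" "hd xs = y" "last xs = x"
    using assms(1-3) unfolding coherent_defeat_def by blast
  then obtain k where k: "Suc k < length xs" "path_strength Pr xs = margin Pr (xs ! k) (xs ! Suc k)"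
    using path_strength_attained by blast
  let ?s = "margin Pr (xs ! k) (xs ! Suc k)"
  have "0 < ?s" using xs(1) k(1) unfolding majority_path_def by blast
  moreover have "?s < margin Pr x y" using d xs k(2) unfolding sc_defeats_def by auto
  moreover have "even (margin Pr x y - ?s)"
    using even_margin_diff margin_pos_imp_cands[OF P] \<open>0 < ?s\<close> \<open>0 < margin Pr x y\<close> P by metis
  ultimately show ?thesis by presburger
qed

lemma sc_defeats_add_voter:
  assumes P: "is_profile Pr" and i: "i \<notin> voters Pr" and R: "strict_linear_order_on (cands Pr) R"
    and M3: "3 \<le> margin Pr x y" and Ryx: "R y x"
    and H: "y \<in> H" "x \<notin> H" "\<And>a b. a \<in> H \<Longrightarrow> margin Pr x y \<le> margin Pr a b \<Longrightarrow> b \<in> H"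
    and leave: "\<And>a b. a \<in> H \<Longrightarrow> b \<in> cands Pr - H \<Longrightarrow> R a b \<Longrightarrow> a = y \<and> margin Pr y b \<le> 0"
  shows "sc_defeats (add_voter Pr i R) x y" and "margin (add_voter Pr i R) x y = margin Pr x y - 1"
proof -
  let ?P' = "add_voter Pr i R" and ?M = "margin Pr x y"
  have P': "is_profile ?P'" using is_profile_add_voter[OF P i R] .
  have "0 < margin Pr x y" using M3 by simp
  then have xy: "x \<in> cands Pr" "y \<in> cands Pr" "x \<noteq> y" by (fact margin_pos_imp_cands[OF P])+
  have "\<not> R x y" using R Ryx unfolding strict_linear_order_on_def by blast
  then show M': "margin ?P' x y = ?M - 1" using margin_add_voter[OF P i R xy] by simp
  have "path_strength ?P' xs < ?M - 1"
    if xs: "majority_path ?P' xs" "hd xs = y" "last xs = x" for xs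
  proof -
    have "xs \<noteq> []" using xs(1) unfolding majority_path_def by auto
    then obtain k where k: "Suc k < length xs" "xs ! k \<in> H" "xs ! Suc k \<notin> H"
      using list_leaves_set[of xs H] xs(2,3) H(1,2) by blast
    let ?a = "xs ! k" and ?b = "xs ! Suc k"
    have "0 < margin ?P' ?a ?b" using xs(1) k(1) unfolding majority_path_def by blast
    then have ab: "?a \<in> cands Pr" "?b \<in> cands Pr" "?a \<noteq> ?b"
      using margin_pos_imp_cands[OF P'] by auto
    have "margin Pr ?a ?b < ?M" using H(3) k(2,3) by force
    moreover have "margin Pr y ?b \<le> 0 \<and> ?a = y" if "R ?a ?b"
      using leave[OF k(2) _ that] ab(2) k(3) by blast
    ultimately have "margin ?P' ?a ?b < ?M - 1"
      using margin_add_voter[OF P i R ab] M3 by (auto split: if_splits)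
    moreover have "path_strength ?P' xs \<le> margin ?P' ?a ?b"
      using path_strength_ge_iff[OF xs(1)] k(1) by blast
    ultimately show ?thesis by linarith
  qed
  then show "sc_defeats ?P' x y" using M' M3 unfolding sc_defeats_def by auto
qed

lemma separating_ballot_exists:
  assumes P: "is_profile Pr" and "0 < margin Pr x y" and H: "y \<in> H" "x \<notin> H"
  obtains R where "strict_linear_order_on (cands Pr) R" and "R y x"
    and "\<forall>z\<in>cands Pr. z \<noteq> y \<longrightarrow> \<not> 0 < margin Pr y z \<longrightarrow> R y z"
    and "\<And>a b. a \<in> H \<Longrightarrow> b \<in> cands Pr - H \<Longrightarrow> R a b \<Longrightarrow> a = y \<and> margin Pr y b \<le> 0"
proof -
  have xy: "x \<in> cands Pr" "y \<in> cands Pr" "x \<noteq> y" by (fact margin_pos_imp_cands[OF P assms(2)])+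
  obtain v where "v \<in> voters Pr" using P unfolding is_profile_def by blast
  then have v: "strict_linear_order_on (cands Pr) (ballot Pr v)" using P unfolding is_profile_def by blast
  define lvl :: "_ \<Rightarrow> nat" where
    "lvl z = (if z = y then 1 else if z \<in> H then 3 else if 0 < margin Pr y z then 0 else 2)" for z
  define R where
    "R a b \<longleftrightarrow> a \<in> cands Pr \<and> b \<in> cands Pr \<and> (lvl a < lvl b \<or> lvl a = lvl b \<and> ballot Pr v a b)"
    for a b
  show ?thesis
  proof (rule that)
    show "strict_linear_order_on (cands Pr) R"
      unfolding R_def by (rule strict_linear_order_on_lex[OF v])
    have "margin Pr y x < 0" using assms(2) margin_antisym[of Pr y x] by simp
    then show "R y x" using xy H(2) unfolding R_def lvl_def by auto
    show "\<forall>z\<in>cands Pr. z \<noteq> y \<longrightarrow> \<not> 0 < margin Pr y z \<longrightarrow> R y z"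
      using xy unfolding R_def lvl_def by auto
    show "a = y \<and> margin Pr y b \<le> 0" if "a \<in> H" "b \<in> cands Pr - H" "R a b" for a b
    proof -
      have "lvl a \<in> {1, 3}" "lvl b \<in> {0, 2}" "b \<noteq> y"
        using that(1,2) H(1) unfolding lvl_def by auto
      moreover have "lvl a \<le> lvl b" using that(3) unfolding R_def by auto
      ultimately have "lvl a = 1" "lvl b = 2" by auto
      then show ?thesis using \<open>b \<noteq> y\<close> unfolding lvl_def by (auto split: if_splits)
    qed
  qed
qed

lemma sc_defeated_winner_reduce_margin:
  fixes F :: "('v, 'c) profile \<Rightarrow> 'c set"
  assumes "infinite (UNIV :: 'v set)" and CD: "coherent_defeat F"
    and TPI: "tolerant_positive_involvement F"
    and P: "is_profile Pr" and yF: "y \<in> F Pr" and d: "sc_defeats Pr x y"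
  obtains Pr' where "is_profile Pr'" and "y \<in> F Pr'" and "sc_defeats Pr' x y"
    and "margin Pr' x y = margin Pr x y - 1"
proof -
  let ?M = "margin Pr x y"
  have M3: "3 \<le> ?M" using coherent_defeat_sc_defeats_margin_ge_3[OF CD P yF d] .
  define H where "H = {z. (\<lambda>a b. ?M \<le> margin Pr a b)\<^sup>*\<^sup>* y z}"
  have H: "y \<in> H" "x \<notin> H" "\<And>a b. a \<in> H \<Longrightarrow> ?M \<le> margin Pr a b \<Longrightarrow> b \<in> H"
    using sc_defeats_not_rtranclp[OF d] unfolding H_def by (auto intro: rtranclp.rtrancl_into_rtrancl)
  have "0 < ?M" using M3 by simp
  then obtain R where R: "strict_linear_order_on (cands Pr) R" and Ryx: "R y x"
    and tolerant: "\<forall>z\<in>cands Pr. z \<noteq> y \<longrightarrow> \<not> 0 < margin Pr y z \<longrightarrow> R y z"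
    and leave: "\<And>a b. a \<in> H \<Longrightarrow> b \<in> cands Pr - H \<Longrightarrow> R a b \<Longrightarrow> a = y \<and> margin Pr y b \<le> 0"
    using separating_ballot_exists[OF P _ H(1,2)] by blast
  have "finite (voters Pr)" using P unfolding is_profile_def by blast
  then obtain i where i: "i \<notin> voters Pr" using ex_new_if_finite[OF assms(1)] by blast
  show ?thesis
  proof (rule that)
    show "is_profile (add_voter Pr i R)" using P i R by (rule is_profile_add_voter)
    show "y \<in> F (add_voter Pr i R)"
      using TPI P yF i R tolerant unfolding tolerant_positive_involvement_def by blast
    show "sc_defeats (add_voter Pr i R) x y"
      using P i R M3 Ryx H leave by (rule sc_defeats_add_voter(1))
    show "margin (add_voter Pr i R) x y = ?M - 1"
      using P i R M3 Ryx H leave by (rule sc_defeats_add_voter(2))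
  qed
qed

lemma winner_not_sc_defeated:
  fixes F :: "('v, 'c) profile \<Rightarrow> 'c set"
  assumes "infinite (UNIV :: 'v set)" and "coherent_defeat F" and "tolerant_positive_involvement F"
    and "is_profile Pr" and "y \<in> F Pr"
  shows "\<not> sc_defeats Pr x y"
  using assms(4,5)
proof (induction "nat (margin Pr x y)" arbitrary: Pr rule: less_induct)
  case less
  show ?case
  proof
    assume d: "sc_defeats Pr x y"
    then obtain Pr' where "is_profile Pr'" "y \<in> F Pr'" "sc_defeats Pr' x y"
      and "margin Pr' x y = margin Pr x y - 1"
      using sc_defeated_winner_reduce_margin[OF assms(1-3) less.prems] by blast
    moreover have "0 < margin Pr x y" using d unfolding sc_defeats_def by blast
    ultimately show False using less.hyps by fastforce
  qed
qed

theorem theorem6p5: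
  fixes F :: "('v, 'c) profile \<Rightarrow> 'c set"
  assumes "infinite (UNIV :: 'v set)" and "infinite (UNIV :: 'c set)"
    and "vscc F" and "coherent_defeat F" and "tolerant_positive_involvement F"
    and "is_profile Pr"
  shows "F Pr \<subseteq> split_cycle Pr"
proof
  fix y assume y: "y \<in> F Pr"
  then have "y \<in> cands Pr" using assms(3,6) unfolding vscc_def by blast
  with y show "y \<in> split_cycle Pr"
    using winner_not_sc_defeated[OF assms(1,4,5,6)] unfolding split_cycle_def by blast
qed

end
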